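(* Let $k\ge1$, $n=2^k-1$, and let $\mathbf{G}\in\mathbb{F}_2^{k\times n}$ be a generator matrix of the $[2^k-1,k,2^{k-1}]_2$ binary simplex code (its columns are all nonzero vectors of $\mathbb{F}_2^k$). Consider the storage system with files $f_1,\dots,f_k$ in which each file's recovery sets are all its recovery sets of size $1$ or $2$ and all servers have service rate $1$. Let $G$ be the graph representation of the code. Then $m(G)=\lambda^\star(\mathbf{G})=v(G)=2^{k-1}$.
   Context: Let $\mathbf{g}_1,\dots,\mathbf{g}_n$ be the columns of $\mathbf{G}$ and $\mathbf{e}_i$ the $i$-th unit vector. The recovery sets of size at most 2 for file $f_i$ are the sets $\{r\}$ with $\mathbf{g}_r=\mathbf{e}_i$ and $\{a,b\}$, $a\ne b$, with $\mathbf{g}_a+\mathbf{g}_b=\mathbf{e}_i$; list them as $R_{i,1},\dots,R_{i,t_i}$. The service rate region $\mathcal{S}(\mathbf{G})$ is the set of $\boldsymbol{\lambda}\in\mathbb{R}^k$ for which there exist real $\lambda_{i,j}\ge0$ with $\sum_j\lambda_{i,j}=\lambda_i$ for all $i$ and $\sum_{i}\sum_{j:\,l\in R_{i,j}}\lambda_{i,j}\le1$ for every server $l\in[n]$; the service capacity is $\lambda^\star(\mathbf{G})=\max\{\sum_i\lambda_i:\boldsymbol{\lambda}\in\mathcal{S}(\mathbf{G})\}$. The graph representation $G$ has vertex set $[n]$ plus one new dummy vertex per size-1 recovery set, and one edge per recovery set: $\{a,b\}$ gives an edge $ab$, $\{r\}$ gives an edge between $r$ and its dummy vertex. $m(G)$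 is the matching number (maximum number of pairwise non-adjacent edges) and $v(G)$ the vertex cover number (minimum number of vertices meeting all edges). *)

theory Defs
  imports "HOL-Analysis.Analysis" "HOL-Library.Z2"
begin

text \<open>Binary vectors in F_2^k are modelled as bit ^ 'k, with k = CARD('k).
  A generator matrix G with n columns is given by its column function
  g :: nat => bit ^ 'k on the server index set {..<n}.\<close>

definition simplex_generator :: "nat \<Rightarrow> (nat \<Rightarrow> bit ^ 'k::finite) \<Rightarrow> bool" where
  "simplex_generator n g \<longleftrightarrow> n = 2 ^ CARD('k) - 1 \<and> bij_betw g {..<n} (UNIV - {0})"

definition recovery_sets :: "nat \<Rightarrow> (nat \<Rightarrow> bit ^ 'k::finite) \<Rightarrow> 'k \<Rightarrow> nat set set" where
  "recovery_sets n g i =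
     {{r} | r. r < n \<and> g r = axis i 1} \<union>
     {{a, b} | a b. a < n \<and> b < n \<and> a \<noteq> b \<and> g a + g b = axis i 1}"

definition service_rate_region :: "nat \<Rightarrow> (nat \<Rightarrow> bit ^ 'k::finite) \<Rightarrow> ('k \<Rightarrow> real) set" where
  "service_rate_region n g =
     {lam. \<exists>lr :: 'k \<Rightarrow> nat set \<Rightarrow> real.
        (\<forall>i. \<forall>R\<in>recovery_sets n g i. lr i R \<ge> 0) \<and>
        (\<forall>i. (\<Sum>R\<in>recovery_sets n g i. lr i R) = lam i) \<and>
        (\<forall>l<n. (\<Sum>i\<in>UNIV. \<Sum>R\<in>{R\<in>recovery_sets n g i. l \<in> R}. lr i R) \<le> 1)}"

definition service_capacity :: "nat \<Rightarrow> (nat \<Rightarrow> bit ^ 'k::finite) \<Rightarrow> real" where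
  "service_capacity n g = Sup {(\<Sum>i\<in>UNIV. lam i) | lam. lam \<in> service_rate_region n g}"

text \<open>Graph representation: vertices are servers Inl l (l < n) plus one dummy
  vertex Inr (i, r) for each size-1 recovery set {r} of file i; one edge per
  recovery set.\<close>
definition graph_vertices :: "nat \<Rightarrow> (nat \<Rightarrow> bit ^ 'k::finite) \<Rightarrow> (nat + ('k \<times> nat)) set" where
  "graph_vertices n g = Inl ` {..<n} \<union> {Inr (i, r) | i r. {r} \<in> recovery_sets n g i}"

definition graph_edges :: "nat \<Rightarrow> (nat \<Rightarrow> bit ^ 'k::finite) \<Rightarrow> (nat + ('k \<times> nat)) set set" where
  "graph_edges n g =
     {{Inl r, Inr (i, r)} | i r. {r} \<in> recovery_sets n g i} \<union>
     {{Inl a, Inl b} | i a b. a \<noteq> b \<and> {a, b} \<in> recovery_sets n g i}"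

definition matching_number :: "'v set set \<Rightarrow> nat" where
  "matching_number E = Max {card M | M. M \<subseteq> E \<and>
      (\<forall>e\<in>M. \<forall>e'\<in>M. e \<noteq> e' \<longrightarrow> e \<inter> e' = {})}"

definition vertex_cover_number :: "'v set \<Rightarrow> 'v set set \<Rightarrow> nat" where
  "vertex_cover_number V E = Min {card C | C. C \<subseteq> V \<and> (\<forall>e\<in>E. e \<inter> C \<noteq> {})}"

end

theory Submission
  imports Defs
begin

text \<open>Call a server odd if the parity (sum of entries) of its column is 1. Every unit vector
  is odd and parity is additive, so every recovery set \<open>{r}\<close> or \<open>{a, b}\<close> contains exactly
  one odd server. Hence the odd servers form a vertex cover of the graph representation, and
  they bound the service capacity, since each recovery set draws on the unit capacity of one
  of them. Conversely, for a fixed file \<open>i\<close> the recovery sets of \<open>f\<^sub>i\<close> are the preimages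
  of the cosets \<open>{v, v + e\<^sub>i}\<close> of nonzero vectors; they are pairwise disjoint and in
  bijection with the odd servers, which gives a matching and a feasible rate vector of the
  same size. For the simplex code there are exactly \<open>2\<^sup>k\<^sup>-\<^sup>1\<close> odd columns.\<close>

definition parity :: "bit ^ 'k::finite \<Rightarrow> bit" where
  "parity v = (\<Sum>i\<in>UNIV. v $ i)"

lemma parity_add: "parity (v + w) = parity v + parity w"
  by (simp only: parity_def vector_add_component sum.distrib)

lemma parity_zero [simp]: "parity 0 = 0"
  by (simp add: parity_def)

lemma parity_axis [simp]: "parity (axis i 1) = 1"
  by (simp add: parity_def axis_def)

lemma bit_add_eq_one_iff: "x + y = (1 :: bit) \<longleftrightarrow> (x = 1 \<longleftrightarrow> y = 0)"
  by (cases x; cases y) simp_all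

lemma bit_vec_add_self [simp]: "v + v = (0 :: bit ^ 'k::finite)"
  by (simp add: vec_eq_iff)

lemma bit_vec_add_cancel_left [simp]: "v + (v + w) = (w :: bit ^ 'k::finite)"
  by (simp flip: add.assoc)

lemma bit_vec_add_cancel_right [simp]: "v + w + w = (v :: bit ^ 'k::finite)"
  by (simp add: add.assoc)

lemma bit_vec_add_eq_iff: "v + w = u \<longleftrightarrow> w = v + (u :: bit ^ 'k::finite)"
  by auto

lemma card_UNIV_bit: "CARD(bit) = 2"
proof -
  have "(UNIV :: bit set) = {0, 1}"
    by (auto intro: bit.exhaust)
  moreover have "card {0 :: bit, 1} = 2"
    by simp
  ultimately show ?thesis
    by (simp only:)
qed

lemma card_odd_parity: "card {v :: bit ^ 'k::finite. parity v = 1} = 2 ^ (CARD('k) - 1)"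
proof -
  fix j :: 'k
  define Odd where "Odd = {v :: bit ^ 'k. parity v = 1}"
  have "finite (UNIV :: (bit ^ 'k) set)"
    by (rule card_ge_0_finite) (simp add: card_UNIV_bit)
  then have fin: "finite Odd"
    by (rule finite_subset [rotated]) simp
  have swap: "v + axis j 1 \<in> Odd \<longleftrightarrow> v \<notin> Odd" for v
    by (cases "parity v") (simp_all add: Odd_def parity_add)
  have "bij_betw (\<lambda>v. v + axis j 1) Odd (UNIV - Odd)"
    by (rule bij_betwI [where g = "\<lambda>v. v + axis j 1"]) (simp_all add: swap)
  then have "card Odd = card (UNIV - Odd)"
    by (rule bij_betw_same_card)
  also have "\<dots> = CARD(bit ^ 'k) - card Odd"
    using fin by (rule card_Diff_subset) simp
  also have "CARD(bit ^ 'k) = 2 * 2 ^ (CARD('k) - 1)"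
    by (simp add: card_UNIV_bit flip: power_Suc)
  finally show ?thesis
    unfolding Odd_def by linarith
qed

lemma card_matching_le_card_cover:
  assumes "finite C" "M \<subseteq> E" "disjoint M" "\<forall>e\<in>E. e \<inter> C \<noteq> {}"
  shows "card M \<le> card C"
proof -
  have "\<forall>e\<in>M. \<exists>x. x \<in> e \<inter> C"
    using assms(2,4) by blast
  then obtain f where f: "\<forall>e\<in>M. f e \<in> e \<inter> C"
    by (auto dest!: bchoice)
  have "inj_on f M"
  proof (rule inj_onI)
    fix e e' assume "e \<in> M" "e' \<in> M" "f e = f e'"
    then have "f e \<in> e \<inter> e'"
      using f by auto
    with \<open>e \<in> M\<close> \<open>e' \<in> M\<close> \<open>disjoint M\<close> show "e = e'"
      by (auto simp: pairwise_def disjnt_def)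
  qed
  moreover have "f ` M \<subseteq> C"
    using f by blast
  ultimately show ?thesis
    using \<open>finite C\<close> by (rule card_inj_on_le)
qed

lemma matching_number_eqI:
  assumes "finite C" "\<forall>e\<in>E. e \<inter> C \<noteq> {}" "M \<subseteq> E" "disjoint M" "card M = card C"
  shows "matching_number E = card C"
proof -
  let ?matchings = "{card M' |M'. M' \<subseteq> E \<and> disjoint M'}"
  have "matching_number E = Max ?matchings"
    by (simp add: matching_number_def pairwise_def disjnt_def)
  also have "\<dots> = card C"
  proof (rule Max_eqI)
    show bound: "m \<le> card C" if "m \<in> ?matchings" for m
      using that card_matching_le_card_cover [OF assms(1) _ _ assms(2)] by blast
    then have "?matchings \<subseteq> {..card C}"
      by auto
    then show "finite ?matchings"
      by (rule finite_subset) simp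
    have "card M \<in> ?matchings"
      using assms(3,4) by blast
    then show "card C \<in> ?matchings"
      using assms(5) by simp
  qed
  finally show ?thesis .
qed

lemma vertex_cover_number_eqI:
  assumes "finite V" "C \<subseteq> V" "\<forall>e\<in>E. e \<inter> C \<noteq> {}" "M \<subseteq> E" "disjoint M" "card M = card C"
  shows "vertex_cover_number V E = card C"
  unfolding vertex_cover_number_def
proof (rule Min_eqI)
  let ?covers = "{card C' |C'. C' \<subseteq> V \<and> (\<forall>e\<in>E. e \<inter> C' \<noteq> {})}"
  show "finite ?covers"
    using \<open>finite V\<close> by simp
  show "card C \<le> c" if "c \<in> ?covers" for c
  proof -
    from that obtain C' where C': "c = card C'" "C' \<subseteq> V" "\<forall>e\<in>E. e \<inter> C' \<noteq> {}"
      by blast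
    then have "finite C'"
      using \<open>finite V\<close> finite_subset by blast
    with C' show ?thesis
      using card_matching_le_card_cover [of C' M E] assms(4-6) by simp
  qed
  show "card C \<in> ?covers"
    using assms(2,3) by blast
qed

lemma recovery_sets_subset: "R \<in> recovery_sets n g i \<Longrightarrow> R \<subseteq> {..<n}"
  by (auto simp: recovery_sets_def)

lemma finite_recovery_sets: "finite (recovery_sets n g i)"
  by (rule finite_subset [of _ "Pow {..<n}"]) (auto dest: recovery_sets_subset)

definition recovery_transversal :: "nat \<Rightarrow> (nat \<Rightarrow> bit ^ 'k::finite) \<Rightarrow> nat set \<Rightarrow> bool" where
  "recovery_transversal n g C \<longleftrightarrow> C \<subseteq> {..<n} \<and> (\<forall>i. \<forall>R\<in>recovery_sets n g i. R \<inter> C \<noteq> {})"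

lemma service_rate_sum_le_card_transversal:
  assumes "rates \<in> service_rate_region n g" "recovery_transversal n g C"
  shows "(\<Sum>i\<in>UNIV. rates i) \<le> card C"
proof -
  obtain lr where nonneg: "\<And>i R. R \<in> recovery_sets n g i \<Longrightarrow> lr i R \<ge> 0"
    and rates: "\<And>i. (\<Sum>R\<in>recovery_sets n g i. lr i R) = rates i"
    and load: "\<And>l. l < n \<Longrightarrow> (\<Sum>i\<in>UNIV. \<Sum>R\<in>{R\<in>recovery_sets n g i. l \<in> R}. lr i R) \<le> 1"
    using assms(1) unfolding service_rate_region_def by blast
  have C: "C \<subseteq> {..<n}"
    using assms(2) by (simp add: recovery_transversal_def)
  then have finC: "finite C"
    using finite_subset by blast
  \<comment> \<open>every recovery set uses a server of \<open>C\<close>, so its rate is charged at least once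
    to the loads of the servers in \<open>C\<close>\<close>
  have "lr i R \<le> (\<Sum>l\<in>{l\<in>C. l \<in> R}. lr i R)" if "R \<in> recovery_sets n g i" for i R
  proof -
    have "{l\<in>C. l \<in> R} \<noteq> {}"
      using assms(2) that unfolding recovery_transversal_def by blast
    then have "1 \<le> card {l\<in>C. l \<in> R}"
      using finC by (simp add: Suc_le_eq card_gt_0_iff)
    then show ?thesis
      using nonneg [OF that] by (simp add: mult_le_cancel_right1)
  qed
  then have "(\<Sum>i\<in>UNIV. rates i)
      \<le> (\<Sum>i\<in>UNIV. \<Sum>R\<in>recovery_sets n g i. \<Sum>l\<in>{l\<in>C. l \<in> R}. lr i R)"
    unfolding rates [symmetric] by (intro sum_mono) auto
  also have "\<dots> = (\<Sum>i\<in>UNIV. \<Sum>l\<in>C. \<Sum>R\<in>{R\<in>recovery_sets n g i. l \<in> R}. lr i R)"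
    by (rule sum.cong [OF refl], rule sum.swap_restrict [OF finite_recovery_sets finC])
  also have "\<dots> = (\<Sum>l\<in>C. \<Sum>i\<in>UNIV. \<Sum>R\<in>{R\<in>recovery_sets n g i. l \<in> R}. lr i R)"
    by (rule sum.swap)
  also have "\<dots> \<le> (\<Sum>l\<in>C. 1)"
    using load C by (intro sum_mono) auto
  finally show ?thesis
    by simp
qed

lemma disjoint_recovery_sets_in_service_rate_region:
  fixes g :: "nat \<Rightarrow> bit ^ 'k::finite"
  assumes "F \<subseteq> recovery_sets n g j" "disjoint F"
  shows "(\<lambda>i. if i = j then real (card F) else 0) \<in> service_rate_region n g"
proof -
  define lr :: "'k \<Rightarrow> nat set \<Rightarrow> real" where "lr i R = (if i = j \<and> R \<in> F then 1 else 0)" for i R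
  have sum_lr: "(\<Sum>R\<in>A. lr i R) = (if i = j then real (card (A \<inter> F)) else 0)" if "finite A" for A i
    using that by (simp add: lr_def sum.If_cases)
  have "card ({R\<in>recovery_sets n g j. l \<in> R} \<inter> F) \<le> 1" for l
  proof -
    have "finite F"
      using assms(1) finite_recovery_sets finite_subset by blast
    moreover have "R = R'" if "R \<in> F" "R' \<in> F" "l \<in> R" "l \<in> R'" for R R'
      using that \<open>disjoint F\<close> by (auto simp: pairwise_def disjnt_def)
    ultimately show ?thesis
      by (simp add: card_le_Suc0_iff_eq)
  qed
  moreover have "recovery_sets n g j \<inter> F = F"
    using assms(1) by blast
  moreover have "lr i R \<ge> 0" for i R
    by (simp add: lr_def)
  ultimately show ?thesis
    unfolding service_rate_region_def
    by (intro CollectI exI [of _ lr]) (simp add: sum_lr finite_recovery_sets)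
qed

lemma service_capacity_eqI:
  assumes "recovery_transversal n g C" "F \<subseteq> recovery_sets n g j" "disjoint F" "card F = card C"
  shows "service_capacity n g = card C"
  unfolding service_capacity_def
proof (rule cSup_eq_maximum)
  show "real (card C) \<in> {\<Sum>i\<in>UNIV. rates i |rates. rates \<in> service_rate_region n g}"
    using disjoint_recovery_sets_in_service_rate_region [OF assms(2,3)] assms(4)
    by (intro CollectI exI [of _ "\<lambda>i. if i = j then real (card F) else 0"]) simp
  show "x \<le> card C" if "x \<in> {\<Sum>i\<in>UNIV. rates i |rates. rates \<in> service_rate_region n g}" for x
    using that service_rate_sum_le_card_transversal [OF _ assms(1)] by blast
qed

definition recovery_edge :: "'k \<Rightarrow> nat set \<Rightarrow> (nat + ('k \<times> nat)) set" where
  "recovery_edge i R = Inl ` R \<union> (if is_singleton R then {Inr (i, the_elem R)} else {})"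

lemma recovery_edge_singleton: "recovery_edge i {r} = {Inl r, Inr (i, r)}"
  by (auto simp: recovery_edge_def)

lemma recovery_edge_doubleton: "a \<noteq> b \<Longrightarrow> recovery_edge i {a, b} = {Inl a, Inl b}"
  by (auto simp: recovery_edge_def is_singleton_def doubleton_eq_iff)

lemma Inl_in_recovery_edge_iff [simp]: "Inl x \<in> recovery_edge i R \<longleftrightarrow> x \<in> R"
  by (auto simp: recovery_edge_def)

lemma inj_on_recovery_edge: "inj_on (recovery_edge i) A"
  by (rule inj_onI) (metis Inl_in_recovery_edge_iff set_eqI)

lemma disjoint_image_recovery_edge:
  assumes "disjoint F"
  shows "disjoint (recovery_edge i ` F)"
proof (rule pairwise_imageI)
  fix R R' assume "R \<in> F" "R' \<in> F" "R \<noteq> R'"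
  then have "R \<inter> R' = {}"
    using \<open>disjoint F\<close> by (auto simp: pairwise_def disjnt_def)
  show "disjnt (recovery_edge i R) (recovery_edge i R')"
    unfolding disjnt_def
  proof (rule equals0I)
    fix y assume y: "y \<in> recovery_edge i R \<inter> recovery_edge i R'"
    show False
    proof (cases y)
      case (Inl x)
      with y \<open>R \<inter> R' = {}\<close> show False
        by auto
    next
      case (Inr p)
      with y have "is_singleton R" "is_singleton R'" "the_elem R = the_elem R'"
        by (auto simp: recovery_edge_def split: if_splits)
      with \<open>R \<noteq> R'\<close> show False
        by (metis is_singleton_the_elem)
    qed
  qed
qed

lemma recovery_edge_in_graph_edges:
  assumes "R \<in> recovery_sets n g i"
  shows "recovery_edge i R \<in> graph_edges n g"
proof -
  from assms consider r where "R = {r}" | a b where "a \<noteq> b" "R = {a, b}"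
    unfolding recovery_sets_def by blast
  then show ?thesis
  proof cases
    case (1 r)
    with assms have "{Inl r, Inr (i, r)} \<in> graph_edges n g"
      unfolding graph_edges_def by blast
    with 1 show ?thesis
      by (simp add: recovery_edge_singleton)
  next
    case (2 a b)
    with assms have "{Inl a, Inl b} \<in> graph_edges n g"
      unfolding graph_edges_def by blast
    with 2 show ?thesis
      by (simp add: recovery_edge_doubleton)
  qed
qed

lemma graph_edgesE:
  assumes "e \<in> graph_edges n g"
  obtains i R where "R \<in> recovery_sets n g i" "e = recovery_edge i R"
proof -
  from assms consider i r where "e = {Inl r, Inr (i, r)}" "{r} \<in> recovery_sets n g i"
    | i a b where "e = {Inl a, Inl b}" "a \<noteq> b" "{a, b} \<in> recovery_sets n g i"
    unfolding graph_edges_def by blast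
  then show thesis
  proof cases
    case (1 i r)
    then show thesis
      using that [of "{r}" i] by (simp add: recovery_edge_singleton)
  next
    case (2 i a b)
    then show thesis
      using that [of "{a, b}" i] by (simp add: recovery_edge_doubleton)
  qed
qed

lemma finite_graph_vertices:
  fixes g :: "nat \<Rightarrow> bit ^ 'k::finite"
  shows "finite (graph_vertices n g)"
proof -
  let ?dummies = "{Inr (i, r) |i r. {r} \<in> recovery_sets n g i} :: (nat + ('k \<times> nat)) set"
  have "?dummies \<subseteq> Inr ` (UNIV \<times> {..<n})"
    by (auto dest: recovery_sets_subset)
  then have "finite ?dummies"
    by (rule finite_subset) simp
  then show ?thesis
    by (simp add: graph_vertices_def)
qed

theorem matching_capacity_transversal_eq_card:
  fixes g :: "nat \<Rightarrow> bit ^ 'k::finite"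
  assumes C: "recovery_transversal n g C"
    and F: "F \<subseteq> recovery_sets n g j" "disjoint F" "card F = card C"
  shows "matching_number (graph_edges n g) = card C"
    and "service_capacity n g = card C"
    and "vertex_cover_number (graph_vertices n g) (graph_edges n g) = card C"
proof -
  let ?C = "Inl ` C :: (nat + ('k \<times> nat)) set"
  let ?M = "recovery_edge j ` F"
  have vertices: "?C \<subseteq> graph_vertices n g"
    using C by (auto simp: recovery_transversal_def graph_vertices_def)
  have cover: "\<forall>e\<in>graph_edges n g. e \<inter> ?C \<noteq> {}"
  proof
    fix e assume "e \<in> graph_edges n g"
    then obtain i R where "R \<in> recovery_sets n g i" "e = recovery_edge i R"
      by (rule graph_edgesE)
    moreover from this(1) obtain l where "l \<in> R" "l \<in> C"
      using C unfolding recovery_transversal_def by blast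
    ultimately have "Inl l \<in> e \<inter> ?C"
      by simp
    then show "e \<inter> ?C \<noteq> {}"
      by blast
  qed
  have M_edges: "?M \<subseteq> graph_edges n g"
    using F(1) recovery_edge_in_graph_edges by blast
  have M_disjoint: "disjoint ?M"
    using F(2) by (rule disjoint_image_recovery_edge)
  have M_card: "card ?M = card ?C"
    using F(3) by (simp add: card_image inj_on_recovery_edge)
  have "finite ?C"
    using C finite_subset by (auto simp: recovery_transversal_def)
  then show "matching_number (graph_edges n g) = card C"
    using matching_number_eqI [OF _ cover M_edges M_disjoint M_card] by (simp add: card_image)
  show "vertex_cover_number (graph_vertices n g) (graph_edges n g) = card C"
    using vertex_cover_number_eqI
      [OF finite_graph_vertices vertices cover M_edges M_disjoint M_card]
    by (simp add: card_image)
  show "service_capacity n g = card C"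
    using C F by (rule service_capacity_eqI)
qed

definition odd_servers :: "nat \<Rightarrow> (nat \<Rightarrow> bit ^ 'k::finite) \<Rightarrow> nat set" where
  "odd_servers n g = {l. l < n \<and> parity (g l) = 1}"

lemma recovery_set_Int_odd_servers:
  assumes "R \<in> recovery_sets n g i"
  shows "\<exists>l. R \<inter> odd_servers n g = {l}"
proof -
  from assms consider r where "R = {r}" "r < n" "g r = axis i 1"
    | a b where "R = {a, b}" "a < n" "b < n" "g a + g b = axis i 1"
    unfolding recovery_sets_def by blast
  then show ?thesis
  proof cases
    case 1
    then show ?thesis
      by (auto simp: odd_servers_def)
  next
    case (2 a b)
    have "parity (g a) + parity (g b) = 1"
      using arg_cong [OF 2(4), of parity] by (simp only: parity_add parity_axis)
    then have odd_iff: "parity (g a) = 1 \<longleftrightarrow> parity (g b) = 0"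
      by (simp only: bit_add_eq_one_iff)
    show ?thesis
    proof (cases "parity (g a) = 1")
      case True
      with 2 odd_iff have "R \<inter> odd_servers n g = {a}"
        by (auto simp: odd_servers_def)
      then show ?thesis ..
    next
      case False
      with 2 odd_iff have "R \<inter> odd_servers n g = {b}"
        by (auto simp: odd_servers_def)
      then show ?thesis ..
    qed
  qed
qed

lemma recovery_transversal_odd_servers: "recovery_transversal n g (odd_servers n g)"
proof -
  have "odd_servers n g \<subseteq> {..<n}"
    by (auto simp: odd_servers_def)
  moreover have "R \<inter> odd_servers n g \<noteq> {}" if "R \<in> recovery_sets n g i" for i R
    using recovery_set_Int_odd_servers [OF that] by force
  ultimately show ?thesis
    by (simp add: recovery_transversal_def)
qed

lemma recovery_set_eq_coset:
  assumes "inj_on g {..<n}" "0 \<notin> g ` {..<n}" "R \<in> recovery_sets n g i" "x \<in> R"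
  shows "R = {y. y < n \<and> g y \<in> {g x, g x + axis i 1}}"
proof -
  from assms(3) consider r where "R = {r}" "r < n" "g r = axis i 1"
    | a b where "R = {a, b}" "a < n" "b < n" "g a + g b = axis i 1"
    unfolding recovery_sets_def by blast
  then show ?thesis
  proof cases
    case (1 r)
    with assms(4) have "x = r"
      by simp
    then show ?thesis
      using 1(1,2) assms(1,2) by (auto simp: inj_on_eq_iff 1(3) [symmetric])
  next
    case (2 a b)
    have "\<exists>y. R = {x, y} \<and> x < n \<and> y < n \<and> g y = g x + axis i 1"
    proof (cases "x = a")
      case True
      with 2 show ?thesis
        by (auto simp: bit_vec_add_eq_iff)
    next
      case False
      with 2 assms(4) have "x = b"
        by simp
      with 2 show ?thesis
        by (intro exI [of _ a]) (auto simp: insert_commute bit_vec_add_eq_iff)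
    qed
    then obtain y where y: "R = {x, y}" "x < n" "y < n" "g y = g x + axis i 1"
      by blast
    show ?thesis
      using y(1-3) assms(1) by (auto simp: inj_on_eq_iff y(4) [symmetric])
  qed
qed

lemma disjoint_recovery_sets:
  assumes "inj_on g {..<n}" "0 \<notin> g ` {..<n}"
  shows "disjoint (recovery_sets n g i)"
proof (rule pairwiseI)
  fix R R' assume R: "R \<in> recovery_sets n g i" and R': "R' \<in> recovery_sets n g i" and "R \<noteq> R'"
  show "disjnt R R'"
    unfolding disjnt_def
  proof (rule equals0I)
    fix x assume "x \<in> R \<inter> R'"
    then have "x \<in> R" "x \<in> R'"
      by simp_all
    then have "R = R'"
      using recovery_set_eq_coset [OF assms R \<open>x \<in> R\<close>]
        recovery_set_eq_coset [OF assms R' \<open>x \<in> R'\<close>] by simp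
    with \<open>R \<noteq> R'\<close> show False ..
  qed
qed

lemma simplex_generatorD:
  assumes "simplex_generator n g"
  shows "inj_on g {..<n}" "0 \<notin> g ` {..<n}" "v \<noteq> 0 \<Longrightarrow> v \<in> g ` {..<n}"
proof -
  from assms have "inj_on g {..<n}" and image: "g ` {..<n} = UNIV - {0}"
    unfolding simplex_generator_def bij_betw_def by blast+
  then show "inj_on g {..<n}" "0 \<notin> g ` {..<n}" "v \<noteq> 0 \<Longrightarrow> v \<in> g ` {..<n}"
    by simp_all
qed

lemma ex_recovery_set_containing:
  assumes "simplex_generator n g" "l < n"
  shows "\<exists>R\<in>recovery_sets n g i. l \<in> R"
proof (cases "g l = axis i 1")
  case True
  with assms(2) have "{l} \<in> recovery_sets n g i"
    by (auto simp: recovery_sets_def)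
  then show ?thesis
    by blast
next
  case False
  have "g l + axis i 1 \<noteq> 0"
  proof
    assume "g l + axis i 1 = 0"
    then have "axis i 1 = g l"
      by (simp add: bit_vec_add_eq_iff)
    with False show False
      by simp
  qed
  then have "g l + axis i 1 \<in> g ` {..<n}"
    by (rule simplex_generatorD(3) [OF assms(1)])
  then obtain m where m: "m < n" "g m = g l + axis i 1"
    by (metis imageE lessThan_iff)
  then have "m \<noteq> l" "g l + g m = axis i 1"
    by auto
  have "{l, m} \<in> recovery_sets n g i"
    unfolding recovery_sets_def
    by (rule UnI2, rule CollectI, rule exI [of _ l], rule exI [of _ m])
      (use assms(2) m \<open>m \<noteq> l\<close> \<open>g l + g m = axis i 1\<close> in simp)
  then show ?thesis
    by (rule bexI [rotated]) simp
qed

lemma card_recovery_sets_eq_card_odd_servers: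
  assumes "simplex_generator n g"
  shows "card (recovery_sets n g i) = card (odd_servers n g)"
proof -
  let ?odd = "\<lambda>R. the_elem (R \<inter> odd_servers n g)"
  have odd: "R \<inter> odd_servers n g = {?odd R}" if R: "R \<in> recovery_sets n g i" for R
  proof -
    obtain l where "R \<inter> odd_servers n g = {l}"
      using recovery_set_Int_odd_servers [OF R] ..
    then show ?thesis
      by simp
  qed
  have disjoint: "disjoint (recovery_sets n g i)"
    using simplex_generatorD(1,2) [OF assms] by (rule disjoint_recovery_sets)
  have "bij_betw ?odd (recovery_sets n g i) (odd_servers n g)"
  proof (rule bij_betw_imageI)
    show "inj_on ?odd (recovery_sets n g i)"
    proof (rule inj_onI)
      fix R R' assume R: "R \<in> recovery_sets n g i" and R': "R' \<in> recovery_sets n g i"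
        and "?odd R = ?odd R'"
      then have "?odd R \<in> R \<inter> R'"
        using odd [OF R] odd [OF R'] by blast
      with R R' disjoint show "R = R'"
        by (auto simp: pairwise_def disjnt_def)
    qed
    show "?odd ` recovery_sets n g i = odd_servers n g"
    proof (intro equalityI subsetI)
      fix l assume "l \<in> ?odd ` recovery_sets n g i"
      then show "l \<in> odd_servers n g"
        using odd by blast
    next
      fix l assume l: "l \<in> odd_servers n g"
      then obtain R where R: "R \<in> recovery_sets n g i" "l \<in> R"
        using ex_recovery_set_containing [OF assms] by (auto simp: odd_servers_def)
      with l odd [OF R(1)] have "l = ?odd R"
        by blast
      with R(1) show "l \<in> ?odd ` recovery_sets n g i"
        by blast
    qed
  qed
  then show ?thesis
    by (rule bij_betw_same_card)
qed

lemma card_odd_servers: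
  fixes g :: "nat \<Rightarrow> bit ^ 'k::finite"
  assumes "simplex_generator n g"
  shows "card (odd_servers n g) = 2 ^ (CARD('k) - 1)"
proof -
  have image: "g ` odd_servers n g = {v. parity v = 1}"
  proof (intro equalityI subsetI)
    fix v :: "bit ^ 'k" assume "v \<in> {v. parity v = 1}"
    then have "parity v = 1" "v \<noteq> 0"
      by auto
    then show "v \<in> g ` odd_servers n g"
      using simplex_generatorD(3) [OF assms] by (auto simp: odd_servers_def)
  qed (auto simp: odd_servers_def)
  have "inj_on g (odd_servers n g)"
    using simplex_generatorD(1) [OF assms] by (rule inj_on_subset) (auto simp: odd_servers_def)
  then have "card (odd_servers n g) = card (g ` odd_servers n g)"
    by (rule card_image [symmetric])
  also have "\<dots> = 2 ^ (CARD('k) - 1)"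
    by (simp add: image card_odd_parity)
  finally show ?thesis .
qed

theorem corollary2:
  fixes n :: nat and g :: "nat \<Rightarrow> bit ^ 'k::finite"
  assumes "simplex_generator n g"
  shows "real (matching_number (graph_edges n g)) = service_capacity n g \<and>
         service_capacity n g = real (vertex_cover_number (graph_vertices n g) (graph_edges n g)) \<and>
         vertex_cover_number (graph_vertices n g) (graph_edges n g) = 2 ^ (CARD('k) - 1)"
proof -
  fix i :: 'k
  have "disjoint (recovery_sets n g i)"
    using simplex_generatorD(1,2) [OF assms] by (rule disjoint_recovery_sets)
  from matching_capacity_transversal_eq_card
      [OF recovery_transversal_odd_servers order_refl this
        card_recovery_sets_eq_card_odd_servers [OF assms]]
  show ?thesis
    using card_odd_servers [OF assms] by simp
qed

end
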